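(* Let $M_{pq}=(W,V_{pq})$ be the inquisitive model with $W=\{w_1,w_2,w_3\}$, $V_{pq}(w_1)=\{p\}$, $V_{pq}(w_2)=\{q\}$, $V_{pq}(w_3)=\emptyset$, where $p,q$ are distinct propositional letters. Let $\varphi(a,b)$ be a formula of $\textsf{INQ}^-$ (with $a,b$ propositional letters) in which $p$ and $q$ do not occur, and let $\varphi(?p,?q)$ denote the result of replacing every occurrence of $a$ by $?p$ and every occurrence of $b$ by $?q$. If $\varphi(?p,?q)\not\equiv_{M_{pq}}\bot$, then $\{w_i\}\models\varphi(?p,?q)$ in $M_{pq}$ for each $i=1,2,3$.
   Context: $\textsf{INQ}^-$ is the propositional language built from countably many propositional letters using the 0-ary connectives $\bot,\top$, the unary connectives $\neg,?$ and the binary connectives $\land$, $\vee$ (inquisitive/global disjunction) and $\otimes$ (tensor). A model is a pair $M=(W,V)$ with $W$ a set of worlds and $V$ assigning to each world a set of propositional letters. Support at a state $s\subseteq W$ is defined by: $s\models p$ iff $p\in V(w)$ for all $w\in s$; $s\models\bot$ iff $s=\emptyset$; $s\models\top$ always; $s\models\psi\land\chi$ iff $s\models\psi$ and $s\models\chi$; $s\models\psi\vee\chi$ iff $s\models\psi$ or $s\models\chi$; $s\models\psi\otimes\chi$ iff there are $t_1,t_2$ with $t_1\models\psi$, $t_2\models\chi$ and $s=t_1\cup t_2$; $s\models\neg\psi$ iff $t\not\models\psi$ for all nonempty... precisely: iff for all $t\subseteq s$, $t\models\psi$ implies $t=\emptyset$; $s\models ?\psi$ iff $s\models\psi$ or $s\models\neg\psi$.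 Two formulas are equivalent in $M$ ($\psi\equiv_M\chi$) if they are supported by exactly the same states of $M$. *)

theory Defs
  imports Main
begin

datatype form =
    Atom nat
  | Bot
  | Top
  | Neg form
  | Quest form
  | Conj form form
  | IDisj form form
  | Tensor form form

fun supp :: "('w set \<times> ('w \<Rightarrow> nat set)) \<Rightarrow> 'w set \<Rightarrow> form \<Rightarrow> bool" where
  "supp M s (Atom p) = (\<forall>w\<in>s. p \<in> snd M w)"
| "supp M s Bot = (s = {})"
| "supp M s Top = True"
| "supp M s (Conj \<psi> \<chi>) = (supp M s \<psi> \<and> supp M s \<chi>)"
| "supp M s (IDisj \<psi> \<chi>) = (supp M s \<psi> \<or> supp M s \<chi>)"
| "supp M s (Tensor \<psi> \<chi>) =
     (\<exists>t1 t2. supp M t1 \<psi> \<and> supp M t2 \<chi> \<and> s = t1 \<union> t2)"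
| "supp M s (Neg \<psi>) = (\<forall>t. t \<subseteq> s \<longrightarrow> supp M t \<psi> \<longrightarrow> t = {})"
| "supp M s (Quest \<psi>) = (supp M s \<psi> \<or> (\<forall>t. t \<subseteq> s \<longrightarrow> supp M t \<psi> \<longrightarrow> t = {}))"

definition equiv_in :: "('w set \<times> ('w \<Rightarrow> nat set)) \<Rightarrow> form \<Rightarrow> form \<Rightarrow> bool" where
  "equiv_in M \<psi> \<chi> = (\<forall>s. s \<subseteq> fst M \<longrightarrow> (supp M s \<psi> = supp M s \<chi>))"

fun letters :: "form \<Rightarrow> nat set" where
  "letters (Atom p) = {p}"
| "letters Bot = {}"
| "letters Top = {}"
| "letters (Neg \<psi>) = letters \<psi>"
| "letters (Quest \<psi>) = letters \<psi>"
| "letters (Conj \<psi> \<chi>) = letters \<psi> \<union> letters \<chi>"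
| "letters (IDisj \<psi> \<chi>) = letters \<psi> \<union> letters \<chi>"
| "letters (Tensor \<psi> \<chi>) = letters \<psi> \<union> letters \<chi>"

fun subst :: "(nat \<Rightarrow> form) \<Rightarrow> form \<Rightarrow> form" where
  "subst \<sigma> (Atom p) = \<sigma> p"
| "subst \<sigma> Bot = Bot"
| "subst \<sigma> Top = Top"
| "subst \<sigma> (Neg \<psi>) = Neg (subst \<sigma> \<psi>)"
| "subst \<sigma> (Quest \<psi>) = Quest (subst \<sigma> \<psi>)"
| "subst \<sigma> (Conj \<psi> \<chi>) = Conj (subst \<sigma> \<psi>) (subst \<sigma> \<chi>)"
| "subst \<sigma> (IDisj \<psi> \<chi>) = IDisj (subst \<sigma> \<psi>) (subst \<sigma> \<chi>)"
| "subst \<sigma> (Tensor \<psi> \<chi>) = Tensor (subst \<sigma> \<psi>) (subst \<sigma> \<chi>)"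

datatype world = w1 | w2 | w3

definition Mpq :: "nat \<Rightarrow> nat \<Rightarrow> world set \<times> (world \<Rightarrow> nat set)" where
  "Mpq p q = (UNIV, (\<lambda>w. case w of w1 \<Rightarrow> {p} | w2 \<Rightarrow> {q} | w3 \<Rightarrow> {}))"

end

theory Submission
  imports Defs
begin

text \<open>In any model, every formula built from contradictions (formulas supported
  only by the empty state) and formulas true at every world (supported by every singleton) with
  the connectives of \<open>INQ\<^sup>-\<close> is again of one of these two kinds. In \<open>M\<^sub>p\<^sub>q\<close> the questions
  \<open>?p\<close>, \<open>?q\<close> are true at every world and every letter other than \<open>p\<close>, \<open>q\<close> is a contradiction,
  so \<open>\<phi>(?p,?q)\<close> is either equivalent to \<open>\<bottom>\<close> or true at every world.\<close>

type_synonym 'w model = "'w set \<times> ('w \<Rightarrow> nat set)"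

definition contradictory :: "'w model \<Rightarrow> form \<Rightarrow> bool" where
  "contradictory M \<psi> \<longleftrightarrow> (\<forall>s. supp M s \<psi> \<longrightarrow> s = {})"

definition true_everywhere :: "'w model \<Rightarrow> form \<Rightarrow> bool" where
  "true_everywhere M \<psi> \<longleftrightarrow> (\<forall>w. supp M {w} \<psi>)"

definition dichotomous :: "'w model \<Rightarrow> form \<Rightarrow> bool" where
  "dichotomous M \<psi> \<longleftrightarrow> contradictory M \<psi> \<or> true_everywhere M \<psi>"

lemma supp_empty: "supp M {} \<psi>"
  by (induction \<psi>) auto

lemma true_everywhere_Quest: "true_everywhere M (Quest \<psi>)"
  by (auto simp: true_everywhere_def subset_singleton_iff)

lemma true_everywhere_Neg: "contradictory M \<psi> \<Longrightarrow> true_everywhere M (Neg \<psi>)"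
  unfolding contradictory_def true_everywhere_def by simp

lemma contradictory_Neg: "true_everywhere M \<psi> \<Longrightarrow> contradictory M (Neg \<psi>)"
  unfolding contradictory_def true_everywhere_def by (auto simp del: insert_subset)

lemma dichotomous_Neg: "dichotomous M \<psi> \<Longrightarrow> dichotomous M (Neg \<psi>)"
  unfolding dichotomous_def using true_everywhere_Neg contradictory_Neg by blast

lemma dichotomous_Conj:
  "dichotomous M \<psi> \<Longrightarrow> dichotomous M \<chi> \<Longrightarrow> dichotomous M (Conj \<psi> \<chi>)"
  unfolding dichotomous_def contradictory_def true_everywhere_def by auto

lemma dichotomous_IDisj:
  "dichotomous M \<psi> \<Longrightarrow> dichotomous M \<chi> \<Longrightarrow> dichotomous M (IDisj \<psi> \<chi>)"
  unfolding dichotomous_def contradictory_def true_everywhere_def by auto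

lemma dichotomous_Tensor:
  assumes "dichotomous M \<psi>" and "dichotomous M \<chi>"
  shows "dichotomous M (Tensor \<psi> \<chi>)"
proof (cases "true_everywhere M \<psi> \<or> true_everywhere M \<chi>")
  case True
  have "supp M {w} (Tensor \<psi> \<chi>)" for w
  proof -
    from True have "(supp M {w} \<psi> \<and> supp M {} \<chi>) \<or> (supp M {} \<psi> \<and> supp M {w} \<chi>)"
      unfolding true_everywhere_def using supp_empty by blast
    then show ?thesis
      by (metis Un_empty_left Un_empty_right supp.simps(6))
  qed
  then show ?thesis
    unfolding dichotomous_def true_everywhere_def by simp
next
  case False
  with assms have "contradictory M \<psi>" and "contradictory M \<chi>"
    unfolding dichotomous_def by auto
  then have "supp M s (Tensor \<psi> \<chi>) \<Longrightarrow> s = {}" for s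
    unfolding contradictory_def by fastforce
  then show ?thesis
    unfolding dichotomous_def contradictory_def by blast
qed

lemma dichotomous_subst:
  assumes "\<And>x. x \<in> letters \<phi> \<Longrightarrow> dichotomous M (\<sigma> x)"
  shows "dichotomous M (subst \<sigma> \<phi>)"
  using assms
proof (induction \<phi>)
  case Bot
  then show ?case by (simp add: dichotomous_def contradictory_def)
next
  case Top
  then show ?case by (simp add: dichotomous_def true_everywhere_def)
next
  case (Quest \<psi>)
  then show ?case by (simp add: dichotomous_def true_everywhere_Quest)
qed (simp_all add: dichotomous_Neg dichotomous_Conj dichotomous_IDisj dichotomous_Tensor)

lemma contradictory_Atom:
  assumes "\<And>w. x \<notin> snd M w"
  shows "contradictory M (Atom x)"
  using assms by (auto simp: contradictory_def)

lemma contradictory_iff_equiv_Bot: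
  assumes "fst M = UNIV"
  shows "contradictory M \<psi> \<longleftrightarrow> equiv_in M \<psi> Bot"
  using assms by (auto simp: contradictory_def equiv_in_def supp_empty)

lemma Mpq_worlds: "fst (Mpq p q) = UNIV"
  by (simp add: Mpq_def)

lemma Mpq_valuation_subset: "snd (Mpq p q) w \<subseteq> {p, q}"
  by (cases w) (auto simp: Mpq_def)

theorem lemma1:
  fixes p q a b :: nat and \<phi> :: form
  assumes "p \<noteq> q" and "a \<noteq> b"
    and "p \<notin> letters \<phi>" and "q \<notin> letters \<phi>"
    and "\<not> equiv_in (Mpq p q)
            (subst ((\<lambda>x. Atom x)(a := Quest (Atom p), b := Quest (Atom q))) \<phi>) Bot"
  shows "\<forall>w. supp (Mpq p q) {w}
            (subst ((\<lambda>x. Atom x)(a := Quest (Atom p), b := Quest (Atom q))) \<phi>)"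
proof -
  let ?\<sigma> = "(\<lambda>x. Atom x)(a := Quest (Atom p), b := Quest (Atom q))"
  have "dichotomous (Mpq p q) (?\<sigma> x)" if "x \<in> letters \<phi>" for x
  proof (cases "x = a \<or> x = b")
    case True
    then show ?thesis by (auto simp: dichotomous_def true_everywhere_Quest)
  next
    case False
    moreover from that assms(3,4) have "x \<notin> snd (Mpq p q) w" for w
      using Mpq_valuation_subset by blast
    ultimately show ?thesis by (simp add: dichotomous_def contradictory_Atom)
  qed
  then have "dichotomous (Mpq p q) (subst ?\<sigma> \<phi>)"
    by (rule dichotomous_subst)
  with assms(5) show ?thesis
    by (simp add: dichotomous_def contradictory_iff_equiv_Bot[OF Mpq_worlds] true_everywhere_def)
qed

end
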